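(* For $\lambda>0$ and $\eta=(\sqrt{1/4+\lambda}-1/2)^{1/2}$, $$\sup_{x,y\in\mathbf{R}^3}|R_0^\pm(\lambda;x,y)|\lesssim\frac{\eta+\sqrt{1+\eta^2}}{1+2\eta^2},\qquad \sup_{x,y\in\mathbf{R}^3}\Big|\frac{d}{d\eta}R_0^\pm(\lambda;x,y)\Big|\lesssim\frac{1}{1+2\eta^2}.$$
   Context: $R_0^\pm(\lambda;x,y)$ is the kernel of $\lim_{\epsilon\downarrow0}(\Delta^2-\Delta-(\lambda\pm i\epsilon))^{-1}$ on $\mathbf{R}^3$: $R_0^\pm(\lambda;x,y)=\frac{1}{1+2\eta^2}\Big(\frac{e^{\pm i\eta|x-y|}}{4\pi|x-y|}-\frac{e^{-\sqrt{1+\eta^2}|x-y|}}{4\pi|x-y|}\Big)$, viewed as a function of $\eta$. *)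

theory Defs
  imports "HOL-Analysis.Analysis"
begin

text \<open>Kernel of the limiting resolvent of \<Delta>^2 - \<Delta> on R^3 as a function of eta.
  The sign parameter sigma is +1 or -1 (for R_0^+ and R_0^-).\<close>
definition R0 :: "real \<Rightarrow> real \<Rightarrow> real^3 \<Rightarrow> real^3 \<Rightarrow> complex" where
  "R0 \<sigma> \<eta> x y =
     (1 / (1 + 2 * \<eta>\<^sup>2)) *\<^sub>R
     ( exp (\<i> * complex_of_real (\<sigma> * \<eta> * norm (x - y))) / complex_of_real (4 * pi * norm (x - y))
       - complex_of_real (exp (- sqrt (1 + \<eta>\<^sup>2) * norm (x - y)) / (4 * pi * norm (x - y))))"

definition eta_of :: "real \<Rightarrow> real" where
  "eta_of lam = sqrt (sqrt (1/4 + lam) - 1/2)"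

end

theory Submission
  imports Defs "HOL-Probability.Characteristic_Functions"
begin

(* Up to the factor 1/(1 + 2\<eta>^2), the kernel is the difference K of the Helmholtz kernel
   exp(\<plusminus>i\<eta>r)/(4\<pi>r) and the Yukawa kernel exp(-\<mu>r)/(4\<pi>r), where \<mu> = sqrt(1 + \<eta>^2) and
   r = |x - y|. Since |exp(it) - 1| \<le> |t| and 1 - exp(-t) \<le> t, the singularities at r = 0 cancel
   and |K| \<le> (\<eta> + \<mu>)/(4\<pi>) uniformly in r. Differentiating in \<eta> produces a factor r that
   cancels the 1/r, so |dK/d\<eta>| \<le> 1/(2\<pi>). The derivative of the prefactor contributes
   4\<eta>|K|/(1 + 2\<eta>^2)^2, which is again O(1/(1 + 2\<eta>^2)) because \<eta>(\<eta> + \<mu>) \<le> 1 + 2\<eta>^2.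
   The constant C = 1 works. *)

definition helmholtz_minus_yukawa :: "real \<Rightarrow> real \<Rightarrow> real \<Rightarrow> complex" where
  "helmholtz_minus_yukawa k \<mu> r =
     exp (\<i> * complex_of_real (k * r)) / complex_of_real (4 * pi * r)
     - complex_of_real (exp (- \<mu> * r) / (4 * pi * r))"

lemma R0_eq_helmholtz_minus_yukawa:
  "R0 \<sigma> \<eta> x y =
     (1 / (1 + 2 * \<eta>\<^sup>2)) *\<^sub>R helmholtz_minus_yukawa (\<sigma> * \<eta>) (sqrt (1 + \<eta>\<^sup>2)) (norm (x - y))"
  by (simp add: R0_def helmholtz_minus_yukawa_def)

lemma abs_one_minus_exp_neg_le:
  fixes t :: real
  assumes "t \<ge> 0"
  shows "\<bar>1 - exp (- t)\<bar> \<le> t"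
  using assms exp_ge_add_one_self[of "- t"] by simp

lemma norm_helmholtz_minus_yukawa_le:
  assumes "r > 0" and "\<mu> \<ge> 0"
  shows "cmod (helmholtz_minus_yukawa k \<mu> r) \<le> (\<bar>k\<bar> + \<mu>) / (4 * pi)"
proof -
  have "helmholtz_minus_yukawa k \<mu> r
      = ((exp (\<i> * complex_of_real (k * r)) - 1) + complex_of_real (1 - exp (- (\<mu> * r))))
        / complex_of_real (4 * pi * r)"
    using assms(1) by (simp add: helmholtz_minus_yukawa_def field_simps)
  also have "cmod \<dots> \<le> (\<bar>k * r\<bar> + \<mu> * r) / (4 * pi * r)"
    unfolding norm_divide norm_of_real
  proof (rule frac_le)
    have "cmod (exp (\<i> * complex_of_real (k * r)) - 1) \<le> \<bar>k * r\<bar>"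
      using iexp_approx1[of "k * r" 0] by simp
    moreover have "cmod (complex_of_real (1 - exp (- (\<mu> * r)))) \<le> \<mu> * r"
      using abs_one_minus_exp_neg_le[of "\<mu> * r"] assms by (simp only: norm_of_real) simp
    ultimately show "cmod ((exp (\<i> * complex_of_real (k * r)) - 1) + complex_of_real (1 - exp (- (\<mu> * r))))
        \<le> \<bar>k * r\<bar> + \<mu> * r"
      by (meson add_mono norm_triangle_ineq order_trans)
  qed (use assms in auto)
  also have "\<dots> = (\<bar>k\<bar> + \<mu>) / (4 * pi)"
    using assms(1) by (simp add: abs_mult field_simps)
  finally show ?thesis .
qed

lemma helmholtz_minus_yukawa_has_vector_derivative:
  assumes "r > 0"
  shows "((\<lambda>\<eta>. helmholtz_minus_yukawa (\<sigma> * \<eta>) (sqrt (1 + \<eta>\<^sup>2)) r) has_vector_derivative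
     (\<i> * complex_of_real \<sigma> * exp (\<i> * complex_of_real (\<sigma> * \<eta> * r))
      + complex_of_real (\<eta> / sqrt (1 + \<eta>\<^sup>2) * exp (- sqrt (1 + \<eta>\<^sup>2) * r)))
     / complex_of_real (4 * pi)) (at \<eta>)"
proof -
  have "((\<lambda>z. exp (\<i> * (of_real \<sigma> * z * of_real r)) / complex_of_real (4 * pi * r))
      has_field_derivative \<i> * complex_of_real \<sigma> * exp (\<i> * complex_of_real (\<sigma> * \<eta> * r))
        / complex_of_real (4 * pi)) (at (of_real \<eta>))"
    using assms by (auto intro!: derivative_eq_intros simp: field_simps)
  then have helmholtz: "((\<lambda>\<eta>. exp (\<i> * complex_of_real (\<sigma> * \<eta> * r)) / complex_of_real (4 * pi * r))
      has_vector_derivative \<i> * complex_of_real \<sigma> * exp (\<i> * complex_of_real (\<sigma> * \<eta> * r))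
        / complex_of_real (4 * pi)) (at \<eta>)"
    by (auto dest: has_vector_derivative_real_field)
  have "((\<lambda>\<eta>. exp (- sqrt (1 + \<eta>\<^sup>2) * r) / (4 * pi * r)) has_real_derivative
      - (\<eta> / sqrt (1 + \<eta>\<^sup>2) * exp (- sqrt (1 + \<eta>\<^sup>2) * r)) / (4 * pi)) (at \<eta>)"
    using assms add_pos_nonneg[of 1 "\<eta>\<^sup>2"]
    by (auto intro!: derivative_eq_intros simp: field_simps)
  then have yukawa: "((\<lambda>\<eta>. complex_of_real (exp (- sqrt (1 + \<eta>\<^sup>2) * r) / (4 * pi * r)))
      has_vector_derivative complex_of_real
        (- (\<eta> / sqrt (1 + \<eta>\<^sup>2) * exp (- sqrt (1 + \<eta>\<^sup>2) * r)) / (4 * pi))) (at \<eta>)"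
    by (rule has_vector_derivative_of_real)
  show ?thesis
    using has_vector_derivative_diff[OF helmholtz yukawa]
    by (simp add: helmholtz_minus_yukawa_def diff_divide_distrib add_divide_distrib)
qed

lemma norm_helmholtz_minus_yukawa_deriv_le:
  assumes "\<bar>\<sigma>\<bar> = 1" and "r \<ge> 0"
  shows "cmod ((\<i> * complex_of_real \<sigma> * exp (\<i> * complex_of_real (\<sigma> * \<eta> * r))
      + complex_of_real (\<eta> / sqrt (1 + \<eta>\<^sup>2) * exp (- sqrt (1 + \<eta>\<^sup>2) * r)))
      / complex_of_real (4 * pi)) \<le> 1 / (2 * pi)"
proof -
  have "\<bar>\<eta>\<bar> \<le> sqrt (1 + \<eta>\<^sup>2)"
    by (rule real_le_rsqrt) simp
  then have "\<bar>\<eta> / sqrt (1 + \<eta>\<^sup>2)\<bar> \<le> 1"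
    by (simp add: divide_le_eq_1 add_pos_nonneg)
  moreover have "exp (- sqrt (1 + \<eta>\<^sup>2) * r) \<le> 1"
    using assms(2) by simp
  ultimately have "\<bar>\<eta> / sqrt (1 + \<eta>\<^sup>2) * exp (- sqrt (1 + \<eta>\<^sup>2) * r)\<bar> \<le> 1"
    unfolding abs_mult by (metis abs_exp_cancel exp_ge_zero mult_le_one)
  moreover have "cmod (\<i> * complex_of_real \<sigma> * exp (\<i> * complex_of_real (\<sigma> * \<eta> * r))) = 1"
    using assms(1) by (simp only: norm_mult norm_of_real norm_exp_i_times) simp
  ultimately have "cmod (\<i> * complex_of_real \<sigma> * exp (\<i> * complex_of_real (\<sigma> * \<eta> * r))
      + complex_of_real (\<eta> / sqrt (1 + \<eta>\<^sup>2) * exp (- sqrt (1 + \<eta>\<^sup>2) * r))) \<le> 2"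
    by (metis norm_of_real norm_triangle_le one_add_one add_left_mono)
  then show ?thesis
    unfolding norm_divide norm_of_real using divide_right_mono[of _ 2 "4 * pi"] by simp
qed

lemma eta_mult_eta_plus_sqrt_le: "\<eta> * (\<eta> + sqrt (1 + \<eta>\<^sup>2)) \<le> 1 + 2 * \<eta>\<^sup>2"
proof -
  have "2 * (\<eta> * sqrt (1 + \<eta>\<^sup>2)) \<le> \<eta>\<^sup>2 + (sqrt (1 + \<eta>\<^sup>2))\<^sup>2"
    using sum_squares_bound[of \<eta> "sqrt (1 + \<eta>\<^sup>2)"] by (simp add: power2_eq_square)
  then show ?thesis
    by (simp add: algebra_simps power2_eq_square)
qed

lemma eta_of_nonneg:
  assumes "lam \<ge> 0"
  shows "eta_of lam \<ge> 0"
proof -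
  have "1 / 2 \<le> sqrt (1 / 4 + lam)"
    using assms by (intro real_le_rsqrt) (simp add: power2_eq_square)
  then show ?thesis
    by (simp add: eta_of_def)
qed

lemma norm_R0_le:
  assumes "\<bar>\<sigma>\<bar> = 1" and "x \<noteq> y" and "\<eta> \<ge> 0"
  shows "cmod (R0 \<sigma> \<eta> x y) \<le> (\<eta> + sqrt (1 + \<eta>\<^sup>2)) / (4 * pi * (1 + 2 * \<eta>\<^sup>2))"
proof -
  have "cmod (R0 \<sigma> \<eta> x y)
      = cmod (helmholtz_minus_yukawa (\<sigma> * \<eta>) (sqrt (1 + \<eta>\<^sup>2)) (norm (x - y))) / (1 + 2 * \<eta>\<^sup>2)"
    by (simp add: R0_eq_helmholtz_minus_yukawa add_pos_nonneg)
  also have "\<dots> \<le> (\<bar>\<sigma> * \<eta>\<bar> + sqrt (1 + \<eta>\<^sup>2)) / (4 * pi) / (1 + 2 * \<eta>\<^sup>2)"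
    using assms(2) by (intro divide_right_mono norm_helmholtz_minus_yukawa_le) auto
  finally show ?thesis
    using assms(1,3) by (simp add: abs_mult)
qed

lemma norm_vector_derivative_R0_le:
  assumes "\<bar>\<sigma>\<bar> = 1" and "x \<noteq> y" and "\<eta> \<ge> 0"
  shows "norm (vector_derivative (\<lambda>e. R0 \<sigma> e x y) (at \<eta>)) \<le> 1 / (1 + 2 * \<eta>\<^sup>2)"
proof -
  define r where "r = norm (x - y)"
  define q where "q = 1 + 2 * \<eta>\<^sup>2"
  define s where "s = sqrt (1 + \<eta>\<^sup>2)"
  define K where "K = helmholtz_minus_yukawa (\<sigma> * \<eta>) s r"
  define K' where "K' = (\<i> * complex_of_real \<sigma> * exp (\<i> * complex_of_real (\<sigma> * \<eta> * r))
      + complex_of_real (\<eta> / s * exp (- s * r))) / complex_of_real (4 * pi)"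
  have r: "r > 0" and q: "q > 0"
    using assms(2) by (auto simp: r_def q_def add_pos_nonneg)
  have "((\<lambda>e. 1 / (1 + 2 * e\<^sup>2)) has_real_derivative - 4 * \<eta> / q\<^sup>2) (at \<eta>)"
    using q unfolding q_def by (auto intro!: derivative_eq_intros simp: field_simps power2_eq_square)
  from has_vector_derivative_scaleR[OF this helmholtz_minus_yukawa_has_vector_derivative[OF r]]
  have R0_deriv: "((\<lambda>e. R0 \<sigma> e x y) has_vector_derivative (1 / q) *\<^sub>R K' + (- 4 * \<eta> / q\<^sup>2) *\<^sub>R K) (at \<eta>)"
    by (simp add: R0_eq_helmholtz_minus_yukawa K_def K'_def q_def r_def s_def)
  have "norm (vector_derivative (\<lambda>e. R0 \<sigma> e x y) (at \<eta>))
      \<le> norm ((1 / q) *\<^sub>R K') + norm ((- 4 * \<eta> / q\<^sup>2) *\<^sub>R K)"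
    unfolding vector_derivative_at[OF R0_deriv] by (rule norm_triangle_ineq)
  also have "\<dots> = cmod K' / q + (4 * \<eta> / q\<^sup>2) * cmod K"
    using q assms(3) by simp
  also have "\<dots> \<le> 1 / (2 * pi) / q + (4 * \<eta> / q\<^sup>2) * ((\<eta> + s) / (4 * pi))"
  proof (intro add_mono divide_right_mono mult_left_mono)
    show "cmod K' \<le> 1 / (2 * pi)"
      unfolding K'_def s_def using assms(1) r by (intro norm_helmholtz_minus_yukawa_deriv_le) auto
    show "cmod K \<le> (\<eta> + s) / (4 * pi)"
      unfolding K_def using norm_helmholtz_minus_yukawa_le[OF r, of s "\<sigma> * \<eta>"] assms(1,3)
      by (simp add: s_def abs_mult)
  qed (use q assms(3) in auto)
  also have "\<dots> = (1 / 2 + \<eta> * (\<eta> + s) / q) / (pi * q)"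
    using q by (simp add: field_simps power2_eq_square)
  also have "\<dots> \<le> (3 / 2) / (pi * q)"
  proof (rule divide_right_mono)
    show "1 / 2 + \<eta> * (\<eta> + s) / q \<le> 3 / 2"
      using eta_mult_eta_plus_sqrt_le[of \<eta>] q by (simp add: s_def q_def pos_divide_le_eq)
  qed (use q in simp_all)
  also have "\<dots> \<le> 1 / q"
    using q pi_gt3 by (simp add: field_simps)
  finally show ?thesis
    unfolding q_def .
qed

theorem lemma4p1:
  shows "\<exists>C. \<forall>\<sigma> \<in> {1, -1}. \<forall>lam::real. \<forall>x y :: real^3.
     lam > 0 \<and> x \<noteq> y \<longrightarrow>
       cmod (R0 \<sigma> (eta_of lam) x y)
         \<le> C * (eta_of lam + sqrt (1 + (eta_of lam)\<^sup>2)) / (1 + 2 * (eta_of lam)\<^sup>2)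
     \<and> norm (vector_derivative (\<lambda>e. R0 \<sigma> e x y) (at (eta_of lam)))
         \<le> C / (1 + 2 * (eta_of lam)\<^sup>2)"
proof (intro exI[of _ 1] ballI allI impI conjI)
  fix \<sigma> lam :: real and x y :: "real^3"
  assume "\<sigma> \<in> {1, -1}" and "lam > 0 \<and> x \<noteq> y"
  then have \<sigma>: "\<bar>\<sigma>\<bar> = 1" and xy: "x \<noteq> y" and \<eta>: "eta_of lam \<ge> 0"
    by (auto intro: eta_of_nonneg)
  let ?\<eta> = "eta_of lam"
  have "(?\<eta> + sqrt (1 + ?\<eta>\<^sup>2)) / (4 * pi * (1 + 2 * ?\<eta>\<^sup>2))
      \<le> 1 * (?\<eta> + sqrt (1 + ?\<eta>\<^sup>2)) / (1 + 2 * ?\<eta>\<^sup>2)"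
    using \<eta> pi_gt3 by (simp add: frac_le add_pos_nonneg)
  with norm_R0_le[OF \<sigma> xy \<eta>]
  show "cmod (R0 \<sigma> ?\<eta> x y) \<le> 1 * (?\<eta> + sqrt (1 + ?\<eta>\<^sup>2)) / (1 + 2 * ?\<eta>\<^sup>2)"
    by linarith
  show "norm (vector_derivative (\<lambda>e. R0 \<sigma> e x y) (at ?\<eta>)) \<le> 1 / (1 + 2 * ?\<eta>\<^sup>2)"
    by (rule norm_vector_derivative_R0_le[OF \<sigma> xy \<eta>])
qed

end
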